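(* Fix an agent $i$ in an $N$-agent Markov game with finite state space $\mathcal S$ and finite action spaces, and fix the other agents' joint policy to be the demonstrator policy $\pi_E^{(-i)}$. Let $\lambda>0$ and let $\psi:\mathbb R^{\mathcal S\times\mathcal A^{(1)}\times\cdots\times\mathcal A^{(N)}}\to\overline{\mathbb R}$ be a closed proper convex function. Define $$\mathrm{RL}^{(i)}(r^{(i)})=\arg\max_{\pi^{(i)}}\ \lambda H(\pi^{(i)})+\mathbb E_{\pi^{(i)},\pi_E^{(-i)}}[r^{(i)}(s,a^{(i)},a^{(-i)})],$$ $$\mathrm{IRL}^{(i)}_\psi(\pi_E^{(i)})=\arg\max_{r^{(i)}}\ -\psi(r^{(i)})-\max_{\pi^{(i)}}\big(\lambda H(\pi^{(i)})+\mathbb E_{\pi^{(i)},\pi_E^{(-i)}}[r^{(i)}]\big)+\mathbb E_{\pi_E}[r^{(i)}],$$ and assume the optimizers involved are unique. Then the policy obtained by running $\mathrm{RL}^{(i)}$ on the reward recovered by $\mathrm{IRL}^{(i)}_\psi$ satisfies $$\mathrm{RL}^{(i)}\circ\mathrm{IRL}^{(i)}_\psi(\pi_E^{(i)})=\arg\min_{\pi^{(i)}}\ -\lambda H(\pi^{(i)})+\psi^*\big(\rho_{\pi^{(i)},\pi_E^{(-i)}}-\rho_{\pi_E}\big),$$ i.e. this IRL problem is the dual of an occupancy-measure matching problem with regularizer $\psi$, and the induced policy is its primal optimum.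
   Context: A Markov game with $N$ agents is $\langle N,\mathcal S,\mathcal A^{(1)},\dots,\mathcal A^{(N)},P,r^{(1)},\dots,r^{(N)},\rho_0,\gamma\rangle$ with transition kernel $P$, initial-state distribution $\rho_0$, discount $\gamma\in[0,1)$, and rewards $r^{(i)}:\mathcal S\times\mathcal A^{(1)}\times\cdots\times\mathcal A^{(N)}\to\mathbb R$. Agent $i$ has policy $\pi^{(i)}(a^{(i)}\mid s)$; $-i$ denotes all agents other than $i$; $\pi=(\pi^{(i)},\pi^{(-i)})$ is the joint policy, and $\pi_E=(\pi_E^{(i)},\pi_E^{(-i)})$ is the demonstrators' joint policy. For any $f$, $\mathbb E_{\pi}[f(s,a)]=\mathbb E[\sum_{t\ge0}\gamma^t f(s_t,a_t)]$ with $s_0\sim\rho_0$, $a_t\sim\pi(\cdot\mid s_t)$, $s_{t+1}\sim P(\cdot\mid s_t,a_t)$. $H(\pi^{(i)})$ is the $\gamma$-discounted causal entropy $\mathbb E_{\pi}[-\log\pi^{(i)}(a^{(i)}\mid s)]$. The occupancy measure of a joint policy $\pi$ is $\rho_\pi(s,a)=\pi(a\mid s)\sum_{t\ge0}\gamma^tP(s_t=s\mid\pi)$, and $\rho_{\pi^{(i)},\pi^{(-i)}}$ denotes $\rho_\pi$ for $\pi=(\pi^{(i)},\pi^{(-i)})$. The conjugate is taken with the sign convention adapted to rewards: $\psi^*(x)=\sup_{r}\big(-\langle x,r\rangle-\psi(r)\big)$, where $\langle x,r\rangle=\sum_{s,a}x(s,a)r(s,a)$. *)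

theory Defs
  imports "HOL-Analysis.Analysis" "HOL-Library.Extended_Real" "HOL-Library.Liminf_Limsup"
begin

definition joint_actions :: "('n \<Rightarrow> 'b set) \<Rightarrow> ('n \<Rightarrow> 'b) set" where
  "joint_actions A = (\<Pi>\<^sub>E j\<in>UNIV. A j)"

definition markov_game ::
  "('n::finite \<Rightarrow> 'b set) \<Rightarrow> ('s::finite \<Rightarrow> ('n \<Rightarrow> 'b) \<Rightarrow> 's \<Rightarrow> real) \<Rightarrow> ('s \<Rightarrow> real) \<Rightarrow> real \<Rightarrow> bool" where
  "markov_game A T rho0 gamma \<longleftrightarrow>
     (\<forall>j. finite (A j) \<and> A j \<noteq> {}) \<and>
     (\<forall>s. \<forall>a\<in>joint_actions A. (\<forall>s'. T s a s' \<ge> 0) \<and> (\<Sum>s'\<in>UNIV. T s a s') = 1) \<and>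
     (\<forall>s. rho0 s \<ge> 0) \<and> (\<Sum>s\<in>UNIV. rho0 s) = 1 \<and>
     0 \<le> gamma \<and> gamma < 1"

text \<open>Stochastic (Markov, stationary) policies of agent j: p s b = pol^(j)(b | s).\<close>
definition policies :: "('n \<Rightarrow> 'b set) \<Rightarrow> 'n \<Rightarrow> ('s \<Rightarrow> 'b \<Rightarrow> real) set" where
  "policies A j = {p. \<forall>s. (\<forall>b. p s b \<ge> 0) \<and> (\<forall>b. b \<notin> A j \<longrightarrow> p s b = 0)
                        \<and> (\<Sum>b\<in>A j. p s b) = 1}"

definition joint_policy :: "('n::finite \<Rightarrow> 's \<Rightarrow> 'b \<Rightarrow> real) \<Rightarrow> 's \<Rightarrow> ('n \<Rightarrow> 'b) \<Rightarrow> real" where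
  "joint_policy P s a = (\<Prod>j\<in>UNIV. P j s (a j))"

fun state_dist ::
  "('n \<Rightarrow> 'b set) \<Rightarrow> ('s::finite \<Rightarrow> ('n \<Rightarrow> 'b) \<Rightarrow> 's \<Rightarrow> real) \<Rightarrow> ('s \<Rightarrow> real)
    \<Rightarrow> ('s \<Rightarrow> ('n \<Rightarrow> 'b) \<Rightarrow> real) \<Rightarrow> nat \<Rightarrow> 's \<Rightarrow> real" where
  "state_dist A T rho0 pol 0 = rho0"
| "state_dist A T rho0 pol (Suc t) =
     (\<lambda>s'. \<Sum>s\<in>UNIV. \<Sum>a\<in>joint_actions A. state_dist A T rho0 pol t s * pol s a * T s a s')"

definition disc_exp ::
  "('n \<Rightarrow> 'b set) \<Rightarrow> ('s::finite \<Rightarrow> ('n \<Rightarrow> 'b) \<Rightarrow> 's \<Rightarrow> real) \<Rightarrow> ('s \<Rightarrow> real) \<Rightarrow> real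
    \<Rightarrow> ('s \<Rightarrow> ('n \<Rightarrow> 'b) \<Rightarrow> real) \<Rightarrow> ('s \<Rightarrow> ('n \<Rightarrow> 'b) \<Rightarrow> real) \<Rightarrow> real" where
  "disc_exp A T rho0 gamma pol f =
     (\<Sum>t. gamma ^ t * (\<Sum>s\<in>UNIV. \<Sum>a\<in>joint_actions A. state_dist A T rho0 pol t s * pol s a * f s a))"

definition occupancy ::
  "('n \<Rightarrow> 'b set) \<Rightarrow> ('s::finite \<Rightarrow> ('n \<Rightarrow> 'b) \<Rightarrow> 's \<Rightarrow> real) \<Rightarrow> ('s \<Rightarrow> real) \<Rightarrow> real
    \<Rightarrow> ('s \<Rightarrow> ('n \<Rightarrow> 'b) \<Rightarrow> real) \<Rightarrow> 's \<Rightarrow> ('n \<Rightarrow> 'b) \<Rightarrow> real" where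
  "occupancy A T rho0 gamma pol s a = pol s a * (\<Sum>t. gamma ^ t * state_dist A T rho0 pol t s)"

definition causal_entropy ::
  "('n::finite \<Rightarrow> 'b set) \<Rightarrow> ('s::finite \<Rightarrow> ('n \<Rightarrow> 'b) \<Rightarrow> 's \<Rightarrow> real) \<Rightarrow> ('s \<Rightarrow> real) \<Rightarrow> real
    \<Rightarrow> ('n \<Rightarrow> 's \<Rightarrow> 'b \<Rightarrow> real) \<Rightarrow> 'n \<Rightarrow> real" where
  "causal_entropy A T rho0 gamma P i =
     disc_exp A T rho0 gamma (joint_policy P) (\<lambda>s a. - ln (P i s (a i)))"

text \<open>The reward space R^{S x A^(1) x ... x A^(N)}, represented as functions vanishing
  outside the joint action space.\<close>
definition rewards :: "('n \<Rightarrow> 'b set) \<Rightarrow> ('s \<Rightarrow> ('n \<Rightarrow> 'b) \<Rightarrow> real) set" where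
  "rewards A = {r. \<forall>s a. a \<notin> joint_actions A \<longrightarrow> r s a = 0}"

definition inner_sa :: "('n \<Rightarrow> 'b set) \<Rightarrow> ('s::finite \<Rightarrow> ('n \<Rightarrow> 'b) \<Rightarrow> real)
    \<Rightarrow> ('s \<Rightarrow> ('n \<Rightarrow> 'b) \<Rightarrow> real) \<Rightarrow> real" where
  "inner_sa A x r = (\<Sum>s\<in>UNIV. \<Sum>a\<in>joint_actions A. x s a * r s a)"

definition proper_fun :: "('n \<Rightarrow> 'b set) \<Rightarrow> (('s \<Rightarrow> ('n \<Rightarrow> 'b) \<Rightarrow> real) \<Rightarrow> ereal) \<Rightarrow> bool" where
  "proper_fun A psi \<longleftrightarrow> (\<forall>r\<in>rewards A. psi r \<noteq> -\<infinity>) \<and> (\<exists>r\<in>rewards A. psi r \<noteq> \<infinity>)"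

definition convex_fun :: "('n \<Rightarrow> 'b set) \<Rightarrow> (('s \<Rightarrow> ('n \<Rightarrow> 'b) \<Rightarrow> real) \<Rightarrow> ereal) \<Rightarrow> bool" where
  "convex_fun A psi \<longleftrightarrow> (\<forall>r1\<in>rewards A. \<forall>r2\<in>rewards A. \<forall>t::real. 0 < t \<and> t < 1 \<longrightarrow>
      psi (\<lambda>s a. t * r1 s a + (1 - t) * r2 s a) \<le> ereal t * psi r1 + ereal (1 - t) * psi r2)"

definition closed_fun :: "('n \<Rightarrow> 'b set) \<Rightarrow> (('s \<Rightarrow> ('n \<Rightarrow> 'b) \<Rightarrow> real) \<Rightarrow> ereal) \<Rightarrow> bool" where
  "closed_fun A psi \<longleftrightarrow> (\<forall>r\<in>rewards A. \<forall>X. (\<forall>k. X k \<in> rewards A) \<and>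
      (\<forall>s a. (\<lambda>k. X k s a) \<longlonglongrightarrow> r s a) \<longrightarrow> psi r \<le> liminf (\<lambda>k. psi (X k)))"

text \<open>Conjugate with the reward sign convention: psi*(x) = sup_r (-<x,r> - psi(r)).\<close>
definition conjugate :: "('n \<Rightarrow> 'b set) \<Rightarrow> (('s::finite \<Rightarrow> ('n \<Rightarrow> 'b) \<Rightarrow> real) \<Rightarrow> ereal)
    \<Rightarrow> ('s \<Rightarrow> ('n \<Rightarrow> 'b) \<Rightarrow> real) \<Rightarrow> ereal" where
  "conjugate A psi x = (SUP r\<in>rewards A. ereal (- inner_sa A x r) - psi r)"

definition rl_obj ::
  "('n::finite \<Rightarrow> 'b set) \<Rightarrow> ('s::finite \<Rightarrow> ('n \<Rightarrow> 'b) \<Rightarrow> 's \<Rightarrow> real) \<Rightarrow> ('s \<Rightarrow> real) \<Rightarrow> real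
    \<Rightarrow> ('n \<Rightarrow> 's \<Rightarrow> 'b \<Rightarrow> real) \<Rightarrow> 'n \<Rightarrow> real \<Rightarrow> ('s \<Rightarrow> ('n \<Rightarrow> 'b) \<Rightarrow> real)
    \<Rightarrow> ('s \<Rightarrow> 'b \<Rightarrow> real) \<Rightarrow> real" where
  "rl_obj A T rho0 gamma piE i lam r p =
     lam * causal_entropy A T rho0 gamma (piE(i := p)) i
     + disc_exp A T rho0 gamma (joint_policy (piE(i := p))) r"

definition irl_obj ::
  "('n::finite \<Rightarrow> 'b set) \<Rightarrow> ('s::finite \<Rightarrow> ('n \<Rightarrow> 'b) \<Rightarrow> 's \<Rightarrow> real) \<Rightarrow> ('s \<Rightarrow> real) \<Rightarrow> real
    \<Rightarrow> ('n \<Rightarrow> 's \<Rightarrow> 'b \<Rightarrow> real) \<Rightarrow> 'n \<Rightarrow> real \<Rightarrow> (('s \<Rightarrow> ('n \<Rightarrow> 'b) \<Rightarrow> real) \<Rightarrow> ereal)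
    \<Rightarrow> ('s \<Rightarrow> ('n \<Rightarrow> 'b) \<Rightarrow> real) \<Rightarrow> ereal" where
  "irl_obj A T rho0 gamma piE i lam psi r =
     - psi r - ereal (SUP p\<in>policies A i. rl_obj A T rho0 gamma piE i lam r p)
     + ereal (disc_exp A T rho0 gamma (joint_policy piE) r)"

definition primal_obj ::
  "('n::finite \<Rightarrow> 'b set) \<Rightarrow> ('s::finite \<Rightarrow> ('n \<Rightarrow> 'b) \<Rightarrow> 's \<Rightarrow> real) \<Rightarrow> ('s \<Rightarrow> real) \<Rightarrow> real
    \<Rightarrow> ('n \<Rightarrow> 's \<Rightarrow> 'b \<Rightarrow> real) \<Rightarrow> 'n \<Rightarrow> real \<Rightarrow> (('s \<Rightarrow> ('n \<Rightarrow> 'b) \<Rightarrow> real) \<Rightarrow> ereal)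
    \<Rightarrow> ('s \<Rightarrow> 'b \<Rightarrow> real) \<Rightarrow> ereal" where
  "primal_obj A T rho0 gamma piE i lam psi p =
     ereal (- lam * causal_entropy A T rho0 gamma (piE(i := p)) i)
     + conjugate A psi (\<lambda>s a. occupancy A T rho0 gamma (joint_policy (piE(i := p))) s a
                              - occupancy A T rho0 gamma (joint_policy piE) s a)"

end

theory Submission
  imports Defs "HOL-Real_Asymp.Real_Asymp"
begin

text \<open>Write \<open>E\<^sub>p\<close> for the discounted expectation when agent \<open>i\<close> plays \<open>p\<close> and the others
  play \<open>\<pi>\<^sub>E\<close>, \<open>h(r)\<close> for the optimal value of the entropy-regularised RL problem with reward \<open>r\<close>,
  and \<open>\<pi>\<^sub>I\<close> for its unique maximiser at the recovered reward \<open>r\<^sub>I\<close>. As \<open>E\<^sub>p r = \<langle>\<rho>\<^sub>p, r\<rangle>\<close>,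
  the conjugate term of the primal objective at \<open>p\<close> is \<open>sup\<^sub>r (E\<^sub>\<pi>\<^sub>E r - E\<^sub>p r - \<psi>(r))\<close>; taking
  \<open>r = r\<^sub>I\<close> and using RL-optimality of \<open>\<pi>\<^sub>I\<close>, the primal objective at any \<open>p\<close> is at least its value
  at \<open>\<pi>\<^sub>I\<close>, provided that at \<open>\<pi>\<^sub>I\<close> the supremum is attained at \<open>r\<^sub>I\<close>. That is the subgradient
  inequality \<open>\<psi>(r) \<ge> \<psi>(r\<^sub>I) + (E\<^sub>\<pi>\<^sub>E - E\<^sub>\<pi>\<^sub>I)(r - r\<^sub>I)\<close>. Along \<open>r\<^sub>t = r\<^sub>I + t(r - r\<^sub>I)\<close>, IRL-optimality
  of \<open>r\<^sub>I\<close> and convexity of \<open>\<psi>\<close> give \<open>h(r\<^sub>t) \<ge> h(r\<^sub>I) + t(\<psi>(r\<^sub>I) - \<psi>(r) + E\<^sub>\<pi>\<^sub>E(r - r\<^sub>I))\<close>, while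
  the right derivative of \<open>h(r\<^sub>t)\<close> at \<open>t = 0\<close> is at most \<open>E\<^sub>\<pi>\<^sub>I(r - r\<^sub>I)\<close>, because near-maximisers
  of \<open>h(r\<^sub>t)\<close> converge to \<open>\<pi>\<^sub>I\<close> as \<open>t \<rightarrow> 0\<close> by compactness of the policy set and uniqueness.\<close>

lemma tendsto_x_ln_x_at_right_0: "((\<lambda>x::real. x * ln x) \<longlongrightarrow> 0) (at_right 0)"
  by real_asymp

lemma continuous_on_x_ln_x: "continuous_on {0..} (\<lambda>x::real. x * ln x)"
  unfolding continuous_on_def
proof (intro ballI)
  fix x :: real assume "x \<in> {0..}"
  show "((\<lambda>x. x * ln x) \<longlongrightarrow> x * ln x) (at x within {0..})"
  proof (cases "x = 0")
    case True
    then show ?thesis using tendsto_x_ln_x_at_right_0 by (simp add: at_within_Ici_at_right)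
  next
    case False
    with \<open>x \<in> {0..}\<close> have "isCont (\<lambda>x::real. x * ln x) x" by (auto intro!: continuous_intros)
    then show ?thesis
      using continuous_at_imp_continuous_at_within[of x _ "{0..}"] by (simp add: continuous_within)
  qed
qed

lemma tendsto_x_ln_x:
  assumes "X \<longlonglongrightarrow> (x::real)" "\<And>k. X k \<ge> 0"
  shows "(\<lambda>k. X k * ln (X k)) \<longlonglongrightarrow> x * ln x"
proof -
  have "x \<ge> 0" using assms by (meson LIMSEQ_le_const)
  then show ?thesis using continuous_on_tendsto_compose[OF continuous_on_x_ln_x assms(1)] assms by auto
qed

lemma abs_x_ln_x_le_1:
  assumes "0 \<le> x" "x \<le> (1::real)"
  shows "\<bar>x * ln x\<bar> \<le> 1"
proof (cases "x = 0")
  case False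
  with assms have x: "0 < x" by auto
  have "- ln x \<le> 1 / x - 1" using ln_le_minus_one[of "1 / x"] x by (simp add: ln_div)
  then have "x * - ln x \<le> 1 - x" using x by (simp add: mult_left_mono field_simps)
  moreover have "x * ln x \<le> 0" using assms x by (simp add: mult_nonneg_nonpos)
  ultimately show ?thesis using assms by linarith
qed simp

lemma tendsto_fun_iff_pointwise:
  fixes X :: "'c \<Rightarrow> 'a \<Rightarrow> 'b::topological_space"
  shows "(X \<longlongrightarrow> x) F \<longleftrightarrow> (\<forall>a. ((\<lambda>k. X k a) \<longlongrightarrow> x a) F)"
proof -
  have "(X \<longlongrightarrow> x) F \<longleftrightarrow> limitin (product_topology (\<lambda>_. euclidean) UNIV) X x F"
    by (simp add: euclidean_product_topology)
  then show ?thesis by (simp add: limitin_componentwise)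
qed

lemma bounded_imp_convergent_subseq_on_finite:
  fixes X :: "nat \<Rightarrow> 'c \<Rightarrow> real"
  assumes "finite C" "\<And>k c. c \<in> C \<Longrightarrow> \<bar>X k c\<bar> \<le> B"
  shows "\<exists>\<sigma>. strict_mono \<sigma> \<and> (\<forall>c\<in>C. convergent (\<lambda>k. X (\<sigma> k) c))"
  using assms
proof (induction C rule: finite_induct)
  case empty
  show ?case by (rule exI[of _ id]) (auto simp: strict_mono_def)
next
  case (insert c C)
  then obtain \<sigma> where \<sigma>: "strict_mono \<sigma>" "\<forall>c\<in>C. convergent (\<lambda>k. X (\<sigma> k) c)" by auto
  obtain f where f: "strict_mono f" "monoseq (\<lambda>n. X (\<sigma> (f n)) c)"
    using seq_monosub[of "\<lambda>k. X (\<sigma> k) c"] by auto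
  have "Bseq (\<lambda>n. X (\<sigma> (f n)) c)" by (rule BseqI'[of _ B]) (use insert.prems in auto)
  then have "convergent (\<lambda>n. X (\<sigma> (f n)) c)" using f(2) by (rule Bseq_monoseq_convergent)
  moreover have "convergent (\<lambda>n. X (\<sigma> (f n)) c')" if "c' \<in> C" for c'
    using convergent_subseq_convergent[OF \<sigma>(2)[rule_format, OF that] f(1)] by (simp add: o_def)
  moreover have "strict_mono (\<lambda>n. \<sigma> (f n))" using strict_mono_o[OF \<sigma>(1) f(1)] by (simp add: o_def)
  ultimately show ?case by (intro exI[of _ "\<lambda>n. \<sigma> (f n)"]) auto
qed

text \<open>One half of Danskin's theorem: the right derivative at \<open>0\<close> of
  \<open>t \<mapsto> sup\<^sub>K (F + t G)\<close> is at most \<open>G\<close> at the unique maximiser of \<open>F\<close>.\<close>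

lemma sup_growth_le_at_unique_argmax:
  fixes F G :: "'a::topological_space \<Rightarrow> real"
  assumes K: "seq_compact K"
    and F_cont: "\<And>X x. (\<And>k. X k \<in> K) \<Longrightarrow> x \<in> K \<Longrightarrow> X \<longlonglongrightarrow> x \<Longrightarrow> (\<lambda>k. F (X k)) \<longlonglongrightarrow> F x"
    and G_cont: "\<And>X x. (\<And>k. X k \<in> K) \<Longrightarrow> x \<in> K \<Longrightarrow> X \<longlonglongrightarrow> x \<Longrightarrow> (\<lambda>k. G (X k)) \<longlonglongrightarrow> G x"
    and G_le: "\<And>x. x \<in> K \<Longrightarrow> G x \<le> B"
    and m: "m \<in> K" and F_le: "\<And>x. x \<in> K \<Longrightarrow> F x \<le> F m"
    and unique: "\<And>x. x \<in> K \<Longrightarrow> F x = F m \<Longrightarrow> x = m"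
    and growth: "\<And>t. 0 < t \<Longrightarrow> t < 1 \<Longrightarrow> F m + t * c \<le> (SUP x\<in>K. F x + t * G x)"
  shows "c \<le> G m"
proof -
  define t :: "nat \<Rightarrow> real" where "t k = 1 / (real k + 2)" for k
  have t: "0 < t k" "t k < 1" for k by (auto simp: t_def)
  have "\<exists>x\<in>K. F m + t k * c - t k * t k < F x + t k * G x" for k
  proof -
    have "F x + t k * G x \<le> F m + t k * B" if "x \<in> K" for x
      using F_le[OF that] G_le[OF that] t[of k] by (simp add: add_mono mult_left_mono)
    then have "bdd_above ((\<lambda>x. F x + t k * G x) ` K)" by (rule bdd_aboveI2)
    moreover have "F m + t k * c - t k * t k < (SUP x\<in>K. F x + t k * G x)"
      using growth[OF t[of k]] mult_pos_pos[OF t(1)[of k] t(1)[of k]] by linarith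
    ultimately show ?thesis using m less_cSUP_iff[of K "\<lambda>x. F x + t k * G x"] by blast
  qed
  then obtain X where X: "\<And>k. X k \<in> K"
    and near: "\<And>k. F m + t k * c - t k * t k < F (X k) + t k * G (X k)"
    by metis
  have G_near: "c - t k < G (X k)" for k
  proof -
    have "t k * (c - t k) < t k * G (X k)"
      using near[of k] F_le[OF X[of k]] by (simp add: algebra_simps)
    then show ?thesis using t[of k] by simp
  qed
  have F_near: "F m - t k * (B - c + t k) < F (X k)" for k
  proof -
    have "t k * G (X k) \<le> t k * B" using G_le[OF X[of k]] t[of k] by (simp add: mult_left_mono)
    then show ?thesis using near[of k] by (simp add: algebra_simps)
  qed
  obtain x \<sigma> where x: "x \<in> K" and \<sigma>: "strict_mono \<sigma>" and lim: "(X \<circ> \<sigma>) \<longlonglongrightarrow> x"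
    using seq_compactE[OF K] X by metis
  have "(\<lambda>k. 1 / (real k + 2)) \<longlonglongrightarrow> 0" by real_asymp
  from LIMSEQ_subseq_LIMSEQ[OF this \<sigma>] have t0: "(\<lambda>k. t (\<sigma> k)) \<longlonglongrightarrow> 0"
    by (simp add: t_def o_def)
  have FX: "(\<lambda>k. F (X (\<sigma> k))) \<longlonglongrightarrow> F x" and GX: "(\<lambda>k. G (X (\<sigma> k))) \<longlonglongrightarrow> G x"
    using F_cont[OF _ x lim] G_cont[OF _ x lim] X by (simp_all add: o_def)
  have "(\<lambda>k. F m - t (\<sigma> k) * (B - c + t (\<sigma> k))) \<longlonglongrightarrow> F m - 0 * (B - c + 0)"
    by (intro tendsto_intros t0)
  from tendsto_le[OF trivial_limit_sequentially FX this] have "F m \<le> F x"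
    by (simp add: less_imp_le[OF F_near])
  then have "x = m" by (intro unique[OF x] antisym[OF F_le[OF x]])
  have "(\<lambda>k. c - t (\<sigma> k)) \<longlonglongrightarrow> c - 0" by (intro tendsto_intros t0)
  from tendsto_le[OF trivial_limit_sequentially GX this] have "c \<le> G x"
    by (simp add: less_imp_le[OF G_near])
  then show ?thesis using \<open>x = m\<close> by simp
qed

definition stochastic :: "('n \<Rightarrow> 'b set) \<Rightarrow> ('s \<Rightarrow> ('n \<Rightarrow> 'b) \<Rightarrow> real) \<Rightarrow> bool" where
  "stochastic A pol \<longleftrightarrow> (\<forall>s a. pol s a \<ge> 0) \<and> (\<forall>s. (\<Sum>a\<in>joint_actions A. pol s a) = 1)"

lemma markov_game_finite_actions: "markov_game A T rho0 gamma \<Longrightarrow> finite (A j)"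
  by (simp add: markov_game_def)

lemma markov_game_finite_joint_actions: "markov_game A T rho0 gamma \<Longrightarrow> finite (joint_actions A)"
  unfolding markov_game_def joint_actions_def by (auto intro!: finite_PiE)

lemma policies_bounds:
  assumes "p \<in> policies A j" "finite (A j)"
  shows "0 \<le> p s b \<and> p s b \<le> 1"
proof (cases "b \<in> A j")
  case True
  then have "p s b \<le> (\<Sum>b\<in>A j. p s b)"
    using assms by (intro member_le_sum) (auto simp: policies_def)
  then show ?thesis using assms(1) by (auto simp: policies_def)
qed (use assms(1) in \<open>auto simp: policies_def\<close>)

lemma stochastic_joint_policy:
  assumes "markov_game A T rho0 gamma" "\<forall>j. P j \<in> policies A j"
  shows "stochastic A (joint_policy P)"
proof -
  have fin: "finite (A j)" for j using assms(1) by (rule markov_game_finite_actions)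
  have "(\<Sum>a\<in>joint_actions A. joint_policy P s a) = (\<Prod>j\<in>UNIV. \<Sum>b\<in>A j. P j s b)" for s
    unfolding joint_policy_def joint_actions_def by (rule prod_sum_PiE[symmetric]) (auto simp: fin)
  moreover have "(\<Sum>b\<in>A j. P j s b) = 1" and "P j s b \<ge> 0" for j s b
    using assms(2) by (auto simp: policies_def)
  ultimately show ?thesis by (auto simp: stochastic_def joint_policy_def intro: prod_nonneg)
qed

lemma stochastic_le_1:
  assumes "markov_game A T rho0 gamma" "stochastic A pol" "a \<in> joint_actions A"
  shows "pol s a \<le> 1"
proof -
  have "pol s a \<le> (\<Sum>a\<in>joint_actions A. pol s a)"
    using assms markov_game_finite_joint_actions[OF assms(1)]
    by (intro member_le_sum) (auto simp: stochastic_def)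
  then show ?thesis using assms(2) by (simp add: stochastic_def)
qed

lemma state_dist_distribution:
  assumes game: "markov_game A T rho0 gamma" and pol: "stochastic A pol"
  shows "(\<forall>s. state_dist A T rho0 pol t s \<ge> 0) \<and> (\<Sum>s\<in>UNIV. state_dist A T rho0 pol t s) = 1"
proof (induction t)
  case 0
  then show ?case using game by (simp add: markov_game_def)
next
  case (Suc t)
  let ?d = "state_dist A T rho0 pol t"
  have T: "\<forall>s. \<forall>a\<in>joint_actions A. (\<forall>s'. T s a s' \<ge> 0) \<and> (\<Sum>s'\<in>UNIV. T s a s') = 1"
    using game by (simp add: markov_game_def)
  have "(\<Sum>s'\<in>UNIV. \<Sum>s\<in>UNIV. \<Sum>a\<in>joint_actions A. ?d s * pol s a * T s a s')
      = (\<Sum>s\<in>UNIV. \<Sum>a\<in>joint_actions A. \<Sum>s'\<in>UNIV. ?d s * pol s a * T s a s')"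
    by (rule trans[OF sum.swap], intro sum.cong refl, rule sum.swap)
  also have "\<dots> = (\<Sum>s\<in>UNIV. \<Sum>a\<in>joint_actions A. ?d s * pol s a)"
    by (intro sum.cong refl) (simp add: sum_distrib_left[symmetric] T)
  also have "\<dots> = (\<Sum>s\<in>UNIV. ?d s)"
    using pol by (intro sum.cong refl) (simp add: sum_distrib_left[symmetric] stochastic_def)
  finally show ?case
    using Suc pol T by (auto simp: stochastic_def intro!: sum_nonneg)
qed

lemma state_dist_bounds:
  assumes "markov_game A T rho0 gamma" "stochastic A pol"
  shows "0 \<le> state_dist A T rho0 pol t s \<and> state_dist A T rho0 pol t s \<le> 1"
proof -
  note d = state_dist_distribution[OF assms, of t]
  have "state_dist A T rho0 pol t s \<le> (\<Sum>s\<in>UNIV. state_dist A T rho0 pol t s)"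
    using d by (intro member_le_sum) auto
  then show ?thesis using d by auto
qed

definition disc_term ::
  "('n \<Rightarrow> 'b set) \<Rightarrow> ('s::finite \<Rightarrow> ('n \<Rightarrow> 'b) \<Rightarrow> 's \<Rightarrow> real) \<Rightarrow> ('s \<Rightarrow> real) \<Rightarrow> real
    \<Rightarrow> ('s \<Rightarrow> ('n \<Rightarrow> 'b) \<Rightarrow> real) \<Rightarrow> ('s \<Rightarrow> ('n \<Rightarrow> 'b) \<Rightarrow> real) \<Rightarrow> nat \<Rightarrow> real" where
  "disc_term A T rho0 gamma pol f t =
     gamma ^ t * (\<Sum>s\<in>UNIV. \<Sum>a\<in>joint_actions A. state_dist A T rho0 pol t s * pol s a * f s a)"

lemma disc_exp_eq_suminf: "disc_exp A T rho0 gamma pol f = suminf (disc_term A T rho0 gamma pol f)"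
  by (simp add: disc_exp_def disc_term_def[abs_def])

lemma abs_disc_term_le:
  fixes gamma B :: real and T :: "'s::finite \<Rightarrow> ('n::finite \<Rightarrow> 'b) \<Rightarrow> 's \<Rightarrow> real"
  assumes game: "markov_game A T rho0 gamma" and pol: "stochastic A pol"
    and B: "\<forall>s. \<forall>a\<in>joint_actions A. \<bar>pol s a * f s a\<bar> \<le> B"
  shows "\<bar>disc_term A T rho0 gamma pol f t\<bar> \<le> gamma ^ t * (CARD('s) * card (joint_actions A) * B)"
proof -
  have "\<bar>state_dist A T rho0 pol t s * pol s a * f s a\<bar> \<le> B" if "a \<in> joint_actions A" for s a
  proof -
    have "\<bar>state_dist A T rho0 pol t s * pol s a * f s a\<bar>
        = \<bar>state_dist A T rho0 pol t s\<bar> * \<bar>pol s a * f s a\<bar>"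
      by (simp add: abs_mult mult.assoc)
    also have "\<dots> \<le> 1 * B" using state_dist_bounds[OF game pol, of t s] B that by (intro mult_mono) auto
    finally show ?thesis by simp
  qed
  then have "\<bar>\<Sum>s\<in>UNIV. \<Sum>a\<in>joint_actions A. state_dist A T rho0 pol t s * pol s a * f s a\<bar>
      \<le> (\<Sum>(s::'s)\<in>UNIV. \<Sum>a\<in>joint_actions A. B)"
    by (intro order.trans[OF sum_abs] sum_mono order.trans[OF sum_abs]) auto
  then show ?thesis
    using game by (simp add: disc_term_def abs_mult mult_left_mono markov_game_def)
qed

lemma abs_policy_mult_le_sum_abs:
  fixes pol :: "'s::finite \<Rightarrow> ('n::finite \<Rightarrow> 'b) \<Rightarrow> real"
  assumes "markov_game A T rho0 gamma" "stochastic A pol" "a \<in> joint_actions A"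
  shows "\<bar>pol s a * f s a\<bar> \<le> (\<Sum>s\<in>UNIV. \<Sum>a\<in>joint_actions A. \<bar>f s a\<bar>)"
proof -
  have "\<bar>pol s a * f s a\<bar> \<le> 1 * \<bar>f s a\<bar>" unfolding abs_mult
    using stochastic_le_1[OF assms, of s] assms(2) by (intro mult_right_mono) (auto simp: stochastic_def)
  also have "\<dots> \<le> (\<Sum>a\<in>joint_actions A. \<bar>f s a\<bar>)"
    using assms(3) markov_game_finite_joint_actions[OF assms(1)] by (auto intro: member_le_sum)
  also have "\<dots> \<le> (\<Sum>s\<in>UNIV. \<Sum>a\<in>joint_actions A. \<bar>f s a\<bar>)"
    by (rule member_le_sum) (auto intro: sum_nonneg)
  finally show ?thesis .
qed

lemma
  fixes gamma B :: real and T :: "'s::finite \<Rightarrow> ('n::finite \<Rightarrow> 'b) \<Rightarrow> 's \<Rightarrow> real"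
  assumes game: "markov_game A T rho0 gamma" and pol: "stochastic A pol"
    and B: "\<forall>s. \<forall>a\<in>joint_actions A. \<bar>pol s a * f s a\<bar> \<le> B"
  shows summable_disc_term: "summable (disc_term A T rho0 gamma pol f)"
    and abs_disc_exp_le:
      "\<bar>disc_exp A T rho0 gamma pol f\<bar> \<le> CARD('s) * card (joint_actions A) * B / (1 - gamma)"
proof -
  have g: "0 \<le> gamma" "gamma < 1" using game by (auto simp: markov_game_def)
  let ?C = "CARD('s) * card (joint_actions A) * B"
  have geom: "summable (\<lambda>t. gamma ^ t * ?C)" using g by (intro summable_mult2 summable_geometric) auto
  have bound: "norm (disc_term A T rho0 gamma pol f t) \<le> gamma ^ t * ?C" for t
    using abs_disc_term_le[OF assms] by simp
  show "summable (disc_term A T rho0 gamma pol f)"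
    by (rule summable_comparison_test[OF _ geom]) (use bound in auto)
  have abs: "summable (\<lambda>t. \<bar>disc_term A T rho0 gamma pol f t\<bar>)"
    by (rule summable_comparison_test[OF _ geom]) (use bound in auto)
  have "\<bar>suminf (disc_term A T rho0 gamma pol f)\<bar> \<le> (\<Sum>t. \<bar>disc_term A T rho0 gamma pol f t\<bar>)"
    using summable_norm[OF abs[unfolded real_norm_def[symmetric]]] by simp
  also have "\<dots> \<le> (\<Sum>t. gamma ^ t * ?C)"
    by (rule suminf_le[OF _ abs geom]) (use bound in auto)
  also have "\<dots> = ?C / (1 - gamma)"
    using g by (simp add: suminf_mult2[symmetric] suminf_geometric)
  finally show "\<bar>disc_exp A T rho0 gamma pol f\<bar> \<le> ?C / (1 - gamma)"
    by (simp add: disc_exp_eq_suminf)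
qed

lemma summable_disc_term_stochastic:
  fixes T :: "'s::finite \<Rightarrow> ('n::finite \<Rightarrow> 'b) \<Rightarrow> 's \<Rightarrow> real"
  assumes "markov_game A T rho0 gamma" "stochastic A pol"
  shows "summable (disc_term A T rho0 gamma pol f)"
  using abs_policy_mult_le_sum_abs[OF assms]
  by (intro summable_disc_term[OF assms, where B = "\<Sum>s\<in>UNIV. \<Sum>a\<in>joint_actions A. \<bar>f s a\<bar>"]) auto

lemma disc_exp_add_scaled:
  fixes T :: "'s::finite \<Rightarrow> ('n::finite \<Rightarrow> 'b) \<Rightarrow> 's \<Rightarrow> real"
  assumes "markov_game A T rho0 gamma" "stochastic A pol"
  shows "disc_exp A T rho0 gamma pol (\<lambda>s a. f s a + c * g s a)
       = disc_exp A T rho0 gamma pol f + c * disc_exp A T rho0 gamma pol g"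
proof -
  have "disc_term A T rho0 gamma pol (\<lambda>s a. f s a + c * g s a)
      = (\<lambda>t. disc_term A T rho0 gamma pol f t + c * disc_term A T rho0 gamma pol g t)"
    by (auto simp: disc_term_def algebra_simps sum.distrib sum_distrib_left)
  then show ?thesis
    using suminf_add[OF summable_disc_term_stochastic[OF assms, of f]
        summable_mult[OF summable_disc_term_stochastic[OF assms, of g], of c]]
      suminf_mult[OF summable_disc_term_stochastic[OF assms, of g], of c]
    by (simp add: disc_exp_eq_suminf)
qed

lemma disc_exp_eq_inner_occupancy:
  fixes T :: "'s::finite \<Rightarrow> ('n::finite \<Rightarrow> 'b) \<Rightarrow> 's \<Rightarrow> real"
  assumes game: "markov_game A T rho0 gamma" and pol: "stochastic A pol"
  shows "disc_exp A T rho0 gamma pol f = inner_sa A (occupancy A T rho0 gamma pol) f"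
proof -
  let ?d = "state_dist A T rho0 pol"
  have g: "0 \<le> gamma" "gamma < 1" using game by (auto simp: markov_game_def)
  have occ: "summable (\<lambda>t. gamma ^ t * ?d t s)" for s
    by (rule summable_comparison_test[OF _ summable_geometric[of gamma]])
       (use g state_dist_bounds[OF game pol] in \<open>auto simp: abs_mult intro!: mult_left_le\<close>)
  have terms: "summable (\<lambda>t. gamma ^ t * ?d t s * pol s a * f s a)" for s a
    using summable_mult2[OF summable_mult2[OF occ[of s], of "pol s a"], of "f s a"]
    by (simp add: mult.assoc)
  have "inner_sa A (occupancy A T rho0 gamma pol) f
     = (\<Sum>s\<in>UNIV. \<Sum>a\<in>joint_actions A. \<Sum>t. gamma ^ t * ?d t s * pol s a * f s a)"
    unfolding inner_sa_def occupancy_def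
  proof (intro sum.cong refl)
    fix s a
    show "pol s a * (\<Sum>t. gamma ^ t * ?d t s) * f s a = (\<Sum>t. gamma ^ t * ?d t s * pol s a * f s a)"
      using suminf_mult2[OF occ[of s], of "pol s a * f s a"] by (simp add: algebra_simps)
  qed
  also have "\<dots> = (\<Sum>t. \<Sum>s\<in>UNIV. \<Sum>a\<in>joint_actions A. gamma ^ t * ?d t s * pol s a * f s a)"
    using terms by (simp add: suminf_sum summable_sum)
  also have "\<dots> = disc_exp A T rho0 gamma pol f"
    by (simp add: disc_exp_def sum_distrib_left mult.assoc)
  finally show ?thesis by simp
qed

lemma tendsto_state_dist:
  assumes "\<forall>s. \<forall>a\<in>joint_actions A. (\<lambda>k. pol k s a) \<longlonglongrightarrow> pol' s a"
  shows "(\<lambda>k. state_dist A T rho0 (pol k) t s) \<longlonglongrightarrow> state_dist A T rho0 pol' t s"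
proof (induction t arbitrary: s)
  case (Suc t)
  show ?case using Suc assms by (simp, intro tendsto_sum tendsto_mult) auto
qed simp

lemma tendsto_disc_exp:
  fixes T :: "'s::finite \<Rightarrow> ('n::finite \<Rightarrow> 'b) \<Rightarrow> 's \<Rightarrow> real"
  assumes game: "markov_game A T rho0 gamma" and pol: "\<And>k. stochastic A (pol k)"
    and pol_lim: "\<forall>s. \<forall>a\<in>joint_actions A. (\<lambda>k. pol k s a) \<longlonglongrightarrow> pol' s a"
    and lim: "\<forall>s. \<forall>a\<in>joint_actions A. (\<lambda>k. pol k s a * f k s a) \<longlonglongrightarrow> pol' s a * f' s a"
    and B: "\<And>k. \<forall>s. \<forall>a\<in>joint_actions A. \<bar>pol k s a * f k s a\<bar> \<le> B"
  shows "(\<lambda>k. disc_exp A T rho0 gamma (pol k) (f k)) \<longlonglongrightarrow> disc_exp A T rho0 gamma pol' f'"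
proof -
  have g: "0 \<le> gamma" "gamma < 1" using game by (auto simp: markov_game_def)
  let ?C = "CARD('s) * card (joint_actions A) * B"
  have "(\<lambda>k. disc_term A T rho0 gamma (pol k) (f k) t) \<longlonglongrightarrow> disc_term A T rho0 gamma pol' f' t" for t
  proof -
    have "(\<lambda>k. state_dist A T rho0 (pol k) t s * (pol k s a * f k s a))
        \<longlonglongrightarrow> state_dist A T rho0 pol' t s * (pol' s a * f' s a)" if "a \<in> joint_actions A" for s a
      by (rule tendsto_mult[OF tendsto_state_dist[OF pol_lim]]) (use lim that in auto)
    then show ?thesis
      unfolding disc_term_def mult.assoc by (intro tendsto_mult_left tendsto_sum) auto
  qed
  moreover have "\<forall>\<^sub>F (t, k) in at_top \<times>\<^sub>F sequentially.
      norm (disc_term A T rho0 gamma (pol k) (f k) t) \<le> gamma ^ t * ?C"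
    using abs_disc_term_le[OF game pol B] by (intro always_eventually) auto
  moreover have "summable (\<lambda>t. gamma ^ t * ?C)"
    using g by (intro summable_mult2 summable_geometric) auto
  ultimately show ?thesis by (simp add: disc_exp_eq_suminf tannerys_theorem)
qed

lemma joint_policy_fun_upd:
  "joint_policy (P(i := p)) s a = p s (a i) * (\<Prod>j\<in>-{i}. P j s (a j))"
  unfolding joint_policy_def Compl_eq_Diff_UNIV
  by (subst prod.remove[of UNIV i]) (auto intro!: prod.cong)

lemma seq_compact_policies:
  assumes "finite (A j)"
  shows "seq_compact (policies A j :: ('s::finite \<Rightarrow> 'b \<Rightarrow> real) set)"
proof (rule seq_compactI)
  fix P :: "nat \<Rightarrow> 's \<Rightarrow> 'b \<Rightarrow> real" assume P: "\<forall>k. P k \<in> policies A j"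
  have "\<bar>P k s b\<bar> \<le> 1" for k s b using policies_bounds[OF P[rule_format] assms, of k s b] by auto
  then obtain \<sigma> where \<sigma>: "strict_mono \<sigma>" and conv: "\<forall>(s, b)\<in>UNIV \<times> A j. convergent (\<lambda>k. P (\<sigma> k) s b)"
    using bounded_imp_convergent_subseq_on_finite[of "UNIV \<times> A j" "\<lambda>k (s, b). P k s b" 1] assms
    by auto
  define p where "p s b = (if b \<in> A j then lim (\<lambda>k. P (\<sigma> k) s b) else 0)" for s b
  have P_out: "P k s b = 0" if "b \<notin> A j" for k s b using P that by (auto simp: policies_def)
  have lim: "(\<lambda>k. P (\<sigma> k) s b) \<longlonglongrightarrow> p s b" for s b
    using conv P_out by (cases "b \<in> A j") (auto simp: p_def convergent_LIMSEQ_iff)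
  have "p \<in> policies A j"
    unfolding policies_def
  proof (intro CollectI allI conjI impI)
    fix s b
    show "0 \<le> p s b" using P by (intro LIMSEQ_le_const[OF lim]) (auto simp: policies_def)
    show "b \<notin> A j \<Longrightarrow> p s b = 0" by (simp add: p_def)
  next
    fix s
    have "(\<lambda>k. \<Sum>b\<in>A j. P (\<sigma> k) s b) \<longlonglongrightarrow> (\<Sum>b\<in>A j. p s b)" by (intro tendsto_sum lim)
    moreover have "(\<lambda>k. \<Sum>b\<in>A j. P (\<sigma> k) s b) = (\<lambda>k. 1)" using P by (auto simp: policies_def)
    ultimately show "(\<Sum>b\<in>A j. p s b) = 1" using LIMSEQ_unique tendsto_const by metis
  qed
  moreover have "(P \<circ> \<sigma>) \<longlonglongrightarrow> p" using lim by (simp add: tendsto_fun_iff_pointwise o_def)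
  ultimately show "\<exists>p\<in>policies A j. \<exists>\<sigma>. strict_mono \<sigma> \<and> (P \<circ> \<sigma>) \<longlonglongrightarrow> p"
    using \<sigma> by (intro bexI exI conjI)
qed

locale demonstrated_game =
  fixes A :: "'n::finite \<Rightarrow> 'b set" and T :: "'s::finite \<Rightarrow> ('n \<Rightarrow> 'b) \<Rightarrow> 's \<Rightarrow> real"
    and rho0 :: "'s \<Rightarrow> real" and gamma :: real
    and piE :: "'n \<Rightarrow> 's \<Rightarrow> 'b \<Rightarrow> real" and i :: 'n
  assumes game: "markov_game A T rho0 gamma"
    and demo: "\<forall>j. piE j \<in> policies A j"
begin

abbreviation return :: "('s \<Rightarrow> 'b \<Rightarrow> real) \<Rightarrow> ('s \<Rightarrow> ('n \<Rightarrow> 'b) \<Rightarrow> real) \<Rightarrow> real" where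
  "return p r \<equiv> disc_exp A T rho0 gamma (joint_policy (piE(i := p))) r"

abbreviation entropy :: "('s \<Rightarrow> 'b \<Rightarrow> real) \<Rightarrow> real" where
  "entropy p \<equiv> causal_entropy A T rho0 gamma (piE(i := p)) i"

abbreviation occupancy_gap :: "('s \<Rightarrow> 'b \<Rightarrow> real) \<Rightarrow> 's \<Rightarrow> ('n \<Rightarrow> 'b) \<Rightarrow> real" where
  "occupancy_gap p \<equiv> \<lambda>s a. occupancy A T rho0 gamma (joint_policy (piE(i := p))) s a
                          - occupancy A T rho0 gamma (joint_policy piE) s a"

abbreviation rl_value :: "real \<Rightarrow> ('s \<Rightarrow> ('n \<Rightarrow> 'b) \<Rightarrow> real) \<Rightarrow> real" where
  "rl_value lam r \<equiv> SUP p\<in>policies A i. rl_obj A T rho0 gamma piE i lam r p"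

lemma demo_agent: "piE i \<in> policies A i"
  using demo by simp

lemma stochastic_deviation: "p \<in> policies A i \<Longrightarrow> stochastic A (joint_policy (piE(i := p)))"
  using demo by (intro stochastic_joint_policy[OF game]) auto

lemma return_add_scaled:
  "p \<in> policies A i \<Longrightarrow> return p (\<lambda>s a. f s a + c * g s a) = return p f + c * return p g"
  by (rule disc_exp_add_scaled[OF game stochastic_deviation])

lemma abs_return_le:
  fixes r :: "'s \<Rightarrow> ('n \<Rightarrow> 'b) \<Rightarrow> real"
  assumes "p \<in> policies A i"
  shows "\<bar>return p r\<bar> \<le> CARD('s) * card (joint_actions A) * (\<Sum>s\<in>UNIV. \<Sum>a\<in>joint_actions A. \<bar>r s a\<bar>) / (1 - gamma)"
  using abs_policy_mult_le_sum_abs[OF game stochastic_deviation[OF assms]]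
  by (intro abs_disc_exp_le[OF game stochastic_deviation[OF assms]]) auto

lemma others_policy_bounds: "0 \<le> (\<Prod>j\<in>-{i}. piE j s (a j)) \<and> (\<Prod>j\<in>-{i}. piE j s (a j)) \<le> 1"
  using policies_bounds[OF demo[rule_format] markov_game_finite_actions[OF game]]
  by (auto intro: prod_nonneg prod_le_1)

lemma abs_entropy_term_le:
  assumes "p \<in> policies A i"
  shows "\<bar>joint_policy (piE(i := p)) s a * - ln (p s (a i))\<bar> \<le> 1"
proof -
  have "\<bar>joint_policy (piE(i := p)) s a * - ln (p s (a i))\<bar>
      = \<bar>\<Prod>j\<in>-{i}. piE j s (a j)\<bar> * \<bar>p s (a i) * ln (p s (a i))\<bar>"
    by (simp add: joint_policy_fun_upd abs_mult)
  also have "\<dots> \<le> 1 * 1"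
    using others_policy_bounds policies_bounds[OF assms markov_game_finite_actions[OF game]]
    by (intro mult_mono abs_x_ln_x_le_1) auto
  finally show ?thesis by simp
qed

lemma
  assumes P: "\<And>k. P k \<in> policies A i" and p: "p \<in> policies A i"
    and lim: "\<And>s b. (\<lambda>k. P k s b) \<longlonglongrightarrow> p s b"
  shows tendsto_return: "(\<lambda>k. return (P k) r) \<longlonglongrightarrow> return p r"
    and tendsto_entropy: "(\<lambda>k. entropy (P k)) \<longlonglongrightarrow> entropy p"
proof -
  have pol_lim: "\<forall>s. \<forall>a\<in>joint_actions A.
      (\<lambda>k. joint_policy (piE(i := P k)) s a) \<longlonglongrightarrow> joint_policy (piE(i := p)) s a"
    using lim by (auto simp: joint_policy_fun_upd intro: tendsto_mult_right)
  note dev = stochastic_deviation[OF P] stochastic_deviation[OF p]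
  show "(\<lambda>k. return (P k) r) \<longlonglongrightarrow> return p r"
    using pol_lim abs_policy_mult_le_sum_abs[OF game dev(1)]
    by (intro tendsto_disc_exp[OF game dev(1) pol_lim]) (auto intro: tendsto_mult_right)
  have "\<forall>s. \<forall>a\<in>joint_actions A. (\<lambda>k. joint_policy (piE(i := P k)) s a * - ln (P k s (a i)))
      \<longlonglongrightarrow> joint_policy (piE(i := p)) s a * - ln (p s (a i))"
  proof (intro allI ballI)
    fix s a
    have "(\<lambda>k. P k s (a i) * ln (P k s (a i))) \<longlonglongrightarrow> p s (a i) * ln (p s (a i))"
      using P lim by (intro tendsto_x_ln_x) (auto simp: policies_def)
    then have "(\<lambda>k. - ((\<Prod>j\<in>-{i}. piE j s (a j)) * (P k s (a i) * ln (P k s (a i)))))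
        \<longlonglongrightarrow> - ((\<Prod>j\<in>-{i}. piE j s (a j)) * (p s (a i) * ln (p s (a i))))"
      by (intro tendsto_minus tendsto_mult_left)
    then show "(\<lambda>k. joint_policy (piE(i := P k)) s a * - ln (P k s (a i)))
        \<longlonglongrightarrow> joint_policy (piE(i := p)) s a * - ln (p s (a i))"
      by (simp add: joint_policy_fun_upd algebra_simps)
  qed
  then show "(\<lambda>k. entropy (P k)) \<longlonglongrightarrow> entropy p"
    unfolding causal_entropy_def using abs_entropy_term_le[OF P]
    by (intro tendsto_disc_exp[OF game dev(1) pol_lim]) auto
qed

lemma rl_obj_eq: "rl_obj A T rho0 gamma piE i lam r p = lam * entropy p + return p r"
  by (simp add: rl_obj_def)

lemma inner_occupancy_diff:
  assumes "p \<in> policies A i"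
  shows "inner_sa A (occupancy_gap p) r = return p r - return (piE i) r"
  using disc_exp_eq_inner_occupancy[OF game stochastic_deviation[OF assms]]
    disc_exp_eq_inner_occupancy[OF game stochastic_joint_policy[OF game demo]]
  by (simp add: inner_sa_def left_diff_distrib sum_subtractf)

lemma conjugate_occupancy_gap_ge:
  assumes "p \<in> policies A i" "r \<in> rewards A"
  shows "ereal (return (piE i) r - return p r) - psi r \<le> conjugate A psi (occupancy_gap p)"
  using SUP_upper[OF assms(2)] by (simp add: conjugate_def inner_occupancy_diff[OF assms(1)])

lemma irl_obj_eq:
  "irl_obj A T rho0 gamma piE i lam psi r = - psi r - ereal (rl_value lam r) + ereal (return (piE i) r)"
  by (simp add: irl_obj_def)

lemma irl_argmax_finite:
  assumes proper: "proper_fun A psi"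
    and irl_opt: "is_arg_max (irl_obj A T rho0 gamma piE i lam psi) (\<lambda>r. r \<in> rewards A) rI"
  shows "\<bar>psi rI\<bar> \<noteq> \<infinity>"
proof -
  obtain r0 where r0: "r0 \<in> rewards A" "psi r0 \<noteq> \<infinity>" using proper by (auto simp: proper_fun_def)
  have "irl_obj A T rho0 gamma piE i lam psi r0 \<le> irl_obj A T rho0 gamma piE i lam psi rI"
    using irl_opt r0 by (auto simp: is_arg_max_def not_less)
  moreover have "psi r0 \<noteq> -\<infinity>" "rI \<in> rewards A" "psi rI \<noteq> -\<infinity>"
    using proper r0 irl_opt by (auto simp: proper_fun_def is_arg_max_def)
  ultimately show ?thesis using r0 by (cases "psi r0"; cases "psi rI") (auto simp: irl_obj_eq)
qed

lemma rl_value_segment_lower_bound: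
  assumes convex: "convex_fun A psi" and proper: "proper_fun A psi"
    and irl_opt: "is_arg_max (irl_obj A T rho0 gamma piE i lam psi) (\<lambda>r. r \<in> rewards A) rI"
    and rI: "psi rI = ereal cI" and r: "r \<in> rewards A" "psi r = ereal c"
    and t: "0 < t" "t < 1"
  shows "rl_value lam rI + t * (cI - c + return (piE i) (\<lambda>s a. r s a - rI s a))
       \<le> rl_value lam (\<lambda>s a. rI s a + t * (r s a - rI s a))"
proof -
  define rt where "rt s a = rI s a + t * (r s a - rI s a)" for s a
  have rI_rew: "rI \<in> rewards A" using irl_opt by (simp add: is_arg_max_def)
  have rt_rew: "rt \<in> rewards A" using r rI_rew by (auto simp: rewards_def rt_def)
  have "rt = (\<lambda>s a. t * r s a + (1 - t) * rI s a)" by (intro ext) (simp add: rt_def algebra_simps)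
  then have "psi rt \<le> ereal t * psi r + ereal (1 - t) * psi rI"
    using convex r(1) rI_rew t unfolding convex_fun_def by blast
  also have "\<dots> = ereal (t * c + (1 - t) * cI)" using r rI by simp
  finally obtain ct where ct: "psi rt = ereal ct" "ct \<le> t * c + (1 - t) * cI"
    using proper rt_rew by (cases "psi rt") (auto simp: proper_fun_def)
  have "irl_obj A T rho0 gamma piE i lam psi rt \<le> irl_obj A T rho0 gamma piE i lam psi rI"
    using irl_opt rt_rew by (auto simp: is_arg_max_def not_less)
  then have "- ct - rl_value lam rt + return (piE i) rt \<le> - cI - rl_value lam rI + return (piE i) rI"
    by (simp add: irl_obj_eq ct rI)
  moreover have "return (piE i) rt = return (piE i) rI + t * return (piE i) (\<lambda>s a. r s a - rI s a)"
    unfolding rt_def by (rule return_add_scaled[OF demo_agent])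
  moreover have "ct \<le> t * c + cI - t * cI" using ct(2) by (simp add: algebra_simps)
  moreover have "t * (cI - c + return (piE i) (\<lambda>s a. r s a - rI s a))
      = t * cI - t * c + t * return (piE i) (\<lambda>s a. r s a - rI s a)"
    by (simp add: algebra_simps)
  ultimately show ?thesis unfolding rt_def[symmetric] by linarith
qed

text \<open>The subgradient inequality \<open>\<psi>(r) \<ge> \<psi>(r\<^sub>I) + (E\<^sub>\<pi>\<^sub>E - E\<^sub>\<pi>\<^sub>I)(r - r\<^sub>I)\<close>.\<close>

lemma irl_argmax_subgradient:
  assumes convex: "convex_fun A psi" and proper: "proper_fun A psi"
    and irl_opt: "is_arg_max (irl_obj A T rho0 gamma piE i lam psi) (\<lambda>r. r \<in> rewards A) rI"
    and rl_opt: "is_arg_max (rl_obj A T rho0 gamma piE i lam rI) (\<lambda>p. p \<in> policies A i) piI"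
    and rl_unique: "\<forall>p. is_arg_max (rl_obj A T rho0 gamma piE i lam rI) (\<lambda>p. p \<in> policies A i) p \<longrightarrow> p = piI"
    and r: "r \<in> rewards A"
  shows "ereal (return (piE i) r - return piI r) - psi r
       \<le> ereal (return (piE i) rI - return piI rI) - psi rI"
proof (cases "psi r")
  case (real c)
  obtain cI where cI: "psi rI = ereal cI" using irl_argmax_finite[OF proper irl_opt] by force
  define d where "d s a = r s a - rI s a" for s a
  let ?F = "rl_obj A T rho0 gamma piE i lam rI" and ?G = "\<lambda>p. return p d"
  have piI: "piI \<in> policies A i" using rl_opt by (simp add: is_arg_max_def)
  have F_le: "?F p \<le> ?F piI" if "p \<in> policies A i" for p
    using rl_opt that by (auto simp: is_arg_max_def not_less)
  have "cI - c + return (piE i) d \<le> ?G piI"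
  proof (rule sup_growth_le_at_unique_argmax[where K = "policies A i" and F = ?F and G = ?G and m = piI])
    show "seq_compact (policies A i :: ('s \<Rightarrow> 'b \<Rightarrow> real) set)"
      by (rule seq_compact_policies[of A i, OF markov_game_finite_actions[OF game]])
    show "(\<lambda>k. ?F (P k)) \<longlonglongrightarrow> ?F p" "(\<lambda>k. ?G (P k)) \<longlonglongrightarrow> ?G p"
      if P: "\<And>k. P k \<in> policies A i" and p: "p \<in> policies A i" and "P \<longlonglongrightarrow> p" for P p
    proof -
      have lim: "(\<lambda>k. P k s b) \<longlonglongrightarrow> p s b" for s b
        using \<open>P \<longlonglongrightarrow> p\<close> by (simp add: tendsto_fun_iff_pointwise)
      show "(\<lambda>k. ?F (P k)) \<longlonglongrightarrow> ?F p" "(\<lambda>k. ?G (P k)) \<longlonglongrightarrow> ?G p"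
        unfolding rl_obj_eq by (intro tendsto_intros tendsto_return[OF P p lim] tendsto_entropy[OF P p lim])+
    qed
    show "?G p \<le> CARD('s) * card (joint_actions A) * (\<Sum>s\<in>UNIV. \<Sum>a\<in>joint_actions A. \<bar>d s a\<bar>) / (1 - gamma)"
      if "p \<in> policies A i" for p
      using abs_return_le[OF that] by (simp add: abs_le_iff)
    show "p = piI" if "p \<in> policies A i" "?F p = ?F piI" for p
      using rl_unique F_le that by (auto simp: is_arg_max_def not_less)
    show "?F piI + t * (cI - c + return (piE i) d) \<le> (SUP p\<in>policies A i. ?F p + t * ?G p)"
      if "0 < t" "t < 1" for t
    proof -
      have "?F piI = rl_value lam rI" using piI F_le by (intro cSup_eq_maximum[symmetric]) auto
      moreover have "rl_value lam (\<lambda>s a. rI s a + t * d s a) = (SUP p\<in>policies A i. ?F p + t * ?G p)"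
        by (intro SUP_cong refl) (simp add: rl_obj_eq return_add_scaled algebra_simps)
      ultimately show ?thesis
        using rl_value_segment_lower_bound[OF convex proper irl_opt cI r real that, folded d_def]
        by simp
    qed
  qed (use piI F_le in auto)
  then show ?thesis
    using return_add_scaled[OF demo_agent, of rI 1 d] return_add_scaled[OF piI, of rI 1 d] cI real
    by (simp add: d_def)
next
  case PInf
  then show ?thesis by simp
next
  case MInf
  then show ?thesis using proper r by (simp add: proper_fun_def)
qed


lemma conjugate_occupancy_gap_at_rl_argmax:
  assumes convex: "convex_fun A psi" and proper: "proper_fun A psi"
    and irl_opt: "is_arg_max (irl_obj A T rho0 gamma piE i lam psi) (\<lambda>r. r \<in> rewards A) rI"
    and rl_opt: "is_arg_max (rl_obj A T rho0 gamma piE i lam rI) (\<lambda>p. p \<in> policies A i) piI"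
    and rl_unique: "\<forall>p. is_arg_max (rl_obj A T rho0 gamma piE i lam rI) (\<lambda>p. p \<in> policies A i) p \<longrightarrow> p = piI"
  shows "conjugate A psi (occupancy_gap piI) = ereal (return (piE i) rI - return piI rI) - psi rI"
proof (rule antisym)
  have piI: "piI \<in> policies A i" using rl_opt by (simp add: is_arg_max_def)
  show "conjugate A psi (occupancy_gap piI) \<le> ereal (return (piE i) rI - return piI rI) - psi rI"
    unfolding conjugate_def inner_occupancy_diff[OF piI]
    using irl_argmax_subgradient[OF convex proper irl_opt rl_opt rl_unique]
    by (auto intro!: SUP_least)
  show "ereal (return (piE i) rI - return piI rI) - psi rI \<le> conjugate A psi (occupancy_gap piI)"
    using irl_opt by (intro conjugate_occupancy_gap_ge piI) (simp add: is_arg_max_def)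
qed
end

theorem proposition1:
  fixes A :: "'n::finite \<Rightarrow> 'b set"
    and T :: "'s::finite \<Rightarrow> ('n \<Rightarrow> 'b) \<Rightarrow> 's \<Rightarrow> real"
    and rho0 :: "'s \<Rightarrow> real" and gamma :: real
    and piE :: "'n \<Rightarrow> 's \<Rightarrow> 'b \<Rightarrow> real" and i :: 'n and lam :: real
    and psi :: "('s \<Rightarrow> ('n \<Rightarrow> 'b) \<Rightarrow> real) \<Rightarrow> ereal"
    and rI :: "'s \<Rightarrow> ('n \<Rightarrow> 'b) \<Rightarrow> real" and piI :: "'s \<Rightarrow> 'b \<Rightarrow> real"
  assumes game: "markov_game A T rho0 gamma"
    and demo: "\<forall>j. piE j \<in> policies A j"
    and lam_pos: "lam > 0"
    and psi_closed: "closed_fun A psi" and psi_proper: "proper_fun A psi"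
    and psi_convex: "convex_fun A psi"
    and irl_opt: "is_arg_max (irl_obj A T rho0 gamma piE i lam psi) (\<lambda>r. r \<in> rewards A) rI"
    and irl_unique: "\<forall>r. is_arg_max (irl_obj A T rho0 gamma piE i lam psi) (\<lambda>r. r \<in> rewards A) r \<longrightarrow> r = rI"
    and rl_opt: "is_arg_max (rl_obj A T rho0 gamma piE i lam rI) (\<lambda>p. p \<in> policies A i) piI"
    and rl_unique: "\<forall>p. is_arg_max (rl_obj A T rho0 gamma piE i lam rI) (\<lambda>p. p \<in> policies A i) p \<longrightarrow> p = piI"
    and primal_unique: "\<forall>p q. is_arg_min (primal_obj A T rho0 gamma piE i lam psi) (\<lambda>p. p \<in> policies A i) p
        \<and> is_arg_min (primal_obj A T rho0 gamma piE i lam psi) (\<lambda>p. p \<in> policies A i) q \<longrightarrow> p = q"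
  shows "is_arg_min (primal_obj A T rho0 gamma piE i lam psi) (\<lambda>p. p \<in> policies A i) piI"
proof -
  interpret demonstrated_game A T rho0 gamma piE i by (rule demonstrated_game.intro[OF game demo])
  obtain cI where cI: "psi rI = ereal cI" using irl_argmax_finite[OF psi_proper irl_opt] by force
  let ?primal = "primal_obj A T rho0 gamma piE i lam psi"
    and ?dual = "\<lambda>p. ereal (return (piE i) rI - return p rI - cI - lam * entropy p)"
  have piI: "piI \<in> policies A i" using rl_opt by (simp add: is_arg_max_def)
  have rI: "rI \<in> rewards A" using irl_opt by (simp add: is_arg_max_def)
  have "?primal piI \<le> ?primal p" if p: "p \<in> policies A i" for p
  proof -
    have "?primal piI = ?dual piI"
      using conjugate_occupancy_gap_at_rl_argmax[OF psi_convex psi_proper irl_opt rl_opt rl_unique]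
      by (simp add: primal_obj_def cI)
    also have "\<dots> \<le> ?dual p"
      using rl_opt p by (auto simp: is_arg_max_def not_less rl_obj_eq)
    also have "\<dots> \<le> ?primal p"
      using add_left_mono[OF conjugate_occupancy_gap_ge[OF p rI, of psi], of "ereal (- lam * entropy p)"]
      by (simp add: primal_obj_def cI)
    finally show ?thesis .
  qed
  then show ?thesis using piI by (auto simp: is_arg_min_def not_less)
qed

end
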